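(* Let $(a_i,b_i)_{i\ge1}$ satisfy $\underline a\le a_i\le\bar a<0$ and $0<\underline b\le b_i\le\bar b$ for all $i$. For $N\ge2$ let $U^*=(u_1^*,\dots,u_N^* )$ be the maximizer of $\sum_{i=1}^N(a_iu_i^2+b_iu_i)$ subject to $\sum_{i=1}^Nu_i=0$, and let $W^*=(w_2^*,\dots,w_N^* )$ be the maximizer of $\sum_{i=2}^N(a_iu_i^2+b_iu_i)$ subject to $\sum_{i=2}^Nu_i=0$. Then there is a constant $C$, independent of $N$, such that $|u_i^*-w_i^*|\le C/N$ for all $2\le i\le N$ and all $N\ge2$; in particular $(u_2^*,\dots,u_N^* )-W^*\to0$ componentwise as $N\to\infty$. *)

theory Defs
  imports Complex_Main
begin

definition quad_obj :: "(nat \<Rightarrow> real) \<Rightarrow> (nat \<Rightarrow> real) \<Rightarrow> nat set \<Rightarrow> (nat \<Rightarrow> real) \<Rightarrow> real" where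
  "quad_obj a b I u = (\<Sum>i\<in>I. a i * (u i)^2 + b i * u i)"

definition is_maximizer :: "(nat \<Rightarrow> real) \<Rightarrow> (nat \<Rightarrow> real) \<Rightarrow> nat set \<Rightarrow> (nat \<Rightarrow> real) \<Rightarrow> bool" where
  "is_maximizer a b I u \<longleftrightarrow>
     (\<Sum>i\<in>I. u i) = 0 \<and>
     (\<forall>v. (\<Sum>i\<in>I. v i) = 0 \<longrightarrow> quad_obj a b I v \<le> quad_obj a b I u)"

end

theory Submission
  imports Defs
begin

text \<open>For negative \<open>a\<^sub>i\<close> the objective is strictly concave, so the constrained maximizer is the
  unique critical point of the Lagrangian: \<open>u\<^sub>i = (\<lambda> - b\<^sub>i) / (2 a\<^sub>i)\<close>, where the multiplier \<open>\<lambda>\<close>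
  is the average of the \<open>b\<^sub>i\<close> weighted by \<open>1 / a\<^sub>i\<close>. Removing the index 1 changes this weighted
  average by \<open>(b\<^sub>1 - \<lambda>) / (a\<^sub>1 S)\<close>, where \<open>S\<close> is the sum of the \<open>1 / a\<^sub>i\<close> over the remaining
  indices; \<open>|S| \<ge> (N - 1) / |a_lo|\<close> gives the rate \<open>1 / N\<close>.\<close>

definition lagrange_multiplier :: "(nat \<Rightarrow> real) \<Rightarrow> (nat \<Rightarrow> real) \<Rightarrow> nat set \<Rightarrow> real" where
  "lagrange_multiplier a b I = (\<Sum>j\<in>I. b j / a j) / (\<Sum>j\<in>I. 1 / a j)"

lemma sum_inverse_neg:
  fixes a :: "nat \<Rightarrow> real"
  assumes "finite I" "I \<noteq> {}" "\<forall>j\<in>I. a j < 0"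
  shows "(\<Sum>j\<in>I. 1 / a j) < 0"
proof -
  have "0 < (\<Sum>j\<in>I. - (1 / a j))" using assms by (intro sum_pos) auto
  then show ?thesis by (simp add: sum_negf)
qed

lemma quad_obj_diff_at_critical_point:
  fixes a b u v :: "nat \<Rightarrow> real"
  assumes crit: "\<forall>j\<in>I. 2 * a j * u j + b j = lam"
    and sums: "(\<Sum>j\<in>I. v j) = (\<Sum>j\<in>I. u j)"
  shows "quad_obj a b I v - quad_obj a b I u = (\<Sum>j\<in>I. a j * (v j - u j)\<^sup>2)"
proof -
  have "quad_obj a b I v - quad_obj a b I u = (\<Sum>j\<in>I. a j * (v j - u j)\<^sup>2 + lam * (v j - u j))"
    unfolding quad_obj_def sum_subtractf[symmetric]
  proof (intro sum.cong refl)
    fix j assume "j \<in> I"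
    with crit have "lam = 2 * a j * u j + b j" by simp
    then show "a j * (v j)\<^sup>2 + b j * v j - (a j * (u j)\<^sup>2 + b j * u j) =
        a j * (v j - u j)\<^sup>2 + lam * (v j - u j)"
      by (simp add: power2_eq_square algebra_simps)
  qed
  also have "\<dots> = (\<Sum>j\<in>I. a j * (v j - u j)\<^sup>2) + lam * ((\<Sum>j\<in>I. v j) - (\<Sum>j\<in>I. u j))"
    by (simp add: sum.distrib sum_distrib_left right_diff_distrib sum_subtractf)
  finally show ?thesis using sums by simp
qed

lemma sum_lagrange_point:
  fixes a b :: "nat \<Rightarrow> real"
  assumes "finite I" "I \<noteq> {}" "\<forall>j\<in>I. a j < 0"
  shows "(\<Sum>j\<in>I. (lagrange_multiplier a b I - b j) / (2 * a j)) = 0"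
proof -
  define lam where "lam = lagrange_multiplier a b I"
  have S: "(\<Sum>j\<in>I. 1 / a j) \<noteq> 0" using sum_inverse_neg[OF assms] by simp
  have "(\<Sum>j\<in>I. (lam - b j) / (2 * a j)) = (\<Sum>j\<in>I. (lam * (1 / a j) - b j / a j) / 2)"
    by (simp add: diff_divide_distrib mult.commute)
  also have "\<dots> = (lam * (\<Sum>j\<in>I. 1 / a j) - (\<Sum>j\<in>I. b j / a j)) / 2"
    by (simp add: sum_divide_distrib[symmetric] sum_distrib_left sum_subtractf)
  also have "\<dots> = 0" using S unfolding lam_def lagrange_multiplier_def by simp
  finally show ?thesis unfolding lam_def .
qed

lemma maximizer_eq_lagrange_point:
  fixes a b u :: "nat \<Rightarrow> real"
  assumes fin: "finite I" and ne: "I \<noteq> {}" and neg: "\<forall>j\<in>I. a j < 0"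
    and max: "is_maximizer a b I u" and i: "i \<in> I"
  shows "u i = (lagrange_multiplier a b I - b i) / (2 * a i)"
proof -
  define us where "us j = (lagrange_multiplier a b I - b j) / (2 * a j)" for j
  have us_sum: "(\<Sum>j\<in>I. us j) = 0"
    unfolding us_def using sum_lagrange_point[OF fin ne neg] .
  have crit: "\<forall>j\<in>I. 2 * a j * us j + b j = lagrange_multiplier a b I"
    unfolding us_def using neg by (auto simp: field_simps)
  have u_sum: "(\<Sum>j\<in>I. u j) = 0" and "quad_obj a b I us \<le> quad_obj a b I u"
    using max us_sum unfolding is_maximizer_def by auto
  then have "0 \<le> (\<Sum>j\<in>I. a j * (u j - us j)\<^sup>2)"
    using quad_obj_diff_at_critical_point[OF crit, of u] us_sum by simp
  then have "(\<Sum>j\<in>I. - (a j * (u j - us j)\<^sup>2)) = 0"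
    using neg by (intro antisym sum_nonneg) (auto simp: sum_negf mult_nonpos_nonneg)
  moreover have "\<forall>j\<in>I. 0 \<le> - (a j * (u j - us j)\<^sup>2)"
    using neg by (auto simp: mult_nonpos_nonneg)
  ultimately have "a i * (u i - us i)\<^sup>2 = 0"
    using sum_nonneg_eq_0_iff[OF fin, of "\<lambda>j. - (a j * (u j - us j)\<^sup>2)"] i by auto
  with neg i show ?thesis unfolding us_def by auto
qed

lemma lagrange_multiplier_bounds:
  fixes a b :: "nat \<Rightarrow> real"
  assumes "finite I" "I \<noteq> {}" "\<forall>j\<in>I. a j < 0" and b: "\<forall>j\<in>I. b_lo \<le> b j \<and> b j \<le> b_hi"
  shows "b_lo \<le> lagrange_multiplier a b I" "lagrange_multiplier a b I \<le> b_hi"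
proof -
  define S where "S = (\<Sum>j\<in>I. 1 / a j)"
  have S: "S < 0" unfolding S_def using sum_inverse_neg[OF assms(1-3)] .
  have "b_hi * S \<le> (\<Sum>j\<in>I. b j / a j)" "(\<Sum>j\<in>I. b j / a j) \<le> b_lo * S"
    unfolding S_def sum_distrib_left using assms by (auto intro!: sum_mono simp: divide_le_cancel)
  with S show "b_lo \<le> lagrange_multiplier a b I" "lagrange_multiplier a b I \<le> b_hi"
    unfolding lagrange_multiplier_def S_def[symmetric] by (auto simp: field_simps)
qed

lemma lagrange_multiplier_insert:
  fixes a b :: "nat \<Rightarrow> real"
  assumes fin: "finite J" "J \<noteq> {}" and k: "k \<notin> J" and neg: "\<forall>j\<in>insert k J. a j < 0"
  shows "(\<Sum>j\<in>J. 1 / a j) * (lagrange_multiplier a b (insert k J) - lagrange_multiplier a b J)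
      = (b k - lagrange_multiplier a b (insert k J)) / a k"
proof -
  define lam mu where "lam = lagrange_multiplier a b (insert k J)" and "mu = lagrange_multiplier a b J"
  define S T where "S = (\<Sum>j\<in>J. 1 / a j)" and "T = (\<Sum>j\<in>J. b j / a j)"
  have "S < 0" unfolding S_def using sum_inverse_neg[OF fin] neg by simp
  then have mu: "mu * S = T" unfolding mu_def S_def T_def lagrange_multiplier_def by simp
  have "1 / a k + S < 0" using \<open>S < 0\<close> neg by (simp add: divide_neg_pos add_neg_neg)
  then have lam: "lam * (1 / a k + S) = b k / a k + T"
    using fin k unfolding lam_def S_def T_def lagrange_multiplier_def by simp
  have "S * (lam - mu) = lam * (1 / a k + S) - lam / a k - mu * S" by (simp add: algebra_simps)
  also have "\<dots> = (b k - lam) / a k" unfolding lam mu by (simp add: diff_divide_distrib)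
  finally show ?thesis unfolding lam_def mu_def S_def .
qed

lemma card_div_le_sum_inverse_abs:
  fixes a :: "nat \<Rightarrow> real"
  assumes "\<forall>j\<in>J. a_lo \<le> a j \<and> a j < 0"
  shows "real (card J) / (- a_lo) \<le> \<bar>\<Sum>j\<in>J. 1 / a j\<bar>"
proof -
  have "(\<Sum>j\<in>J. 1 / a j) \<le> (\<Sum>j\<in>J. 1 / a_lo)"
    using assms by (intro sum_mono) (auto simp: divide_simps)
  moreover have "(\<Sum>j\<in>J. 1 / a j) \<le> 0"
    using assms by (intro sum_nonpos) (auto simp: divide_simps)
  ultimately show ?thesis by simp
qed

lemma maximizer_remove_index_diff:
  fixes a b u w :: "nat \<Rightarrow> real"
  assumes fin: "finite J" "J \<noteq> {}" and k: "k \<notin> J" and a_hi: "a_hi < 0"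
    and a: "\<forall>j\<in>insert k J. a_lo \<le> a j \<and> a j \<le> a_hi"
    and b: "\<forall>j\<in>insert k J. b_lo \<le> b j \<and> b j \<le> b_hi"
    and u: "is_maximizer a b (insert k J) u" and w: "is_maximizer a b J w" and i: "i \<in> J"
  shows "\<bar>u i - w i\<bar> \<le> (b_hi - b_lo) * (- a_lo) / (2 * a_hi\<^sup>2 * real (card J))"
proof -
  define lam mu S where "lam = lagrange_multiplier a b (insert k J)"
    and "mu = lagrange_multiplier a b J" and "S = (\<Sum>j\<in>J. 1 / a j)"
  have neg: "\<forall>j\<in>insert k J. a j < 0" using a a_hi by force
  have a_lo: "a_lo < 0" using a a_hi by force
  have "u i = (lam - b i) / (2 * a i)" "w i = (mu - b i) / (2 * a i)"
    unfolding lam_def mu_def using i fin neg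
    by (auto intro!: maximizer_eq_lagrange_point[OF _ _ _ u] maximizer_eq_lagrange_point[OF _ _ _ w])
  then have "u i - w i = (lam - mu) / (2 * a i)" by (simp add: diff_divide_distrib)
  also have "\<dots> = (b k - lam) / (2 * a i * a k * S)"
  proof -
    have "S \<noteq> 0" unfolding S_def using sum_inverse_neg[OF fin, of a] neg by auto
    then have "(lam - mu) / (2 * a i) = S * (lam - mu) / (2 * a i * S)" by simp
    also have "S * (lam - mu) = (b k - lam) / a k"
      unfolding lam_def mu_def S_def by (rule lagrange_multiplier_insert[OF fin k neg])
    finally show ?thesis by (simp add: mult_ac)
  qed
  finally have "\<bar>u i - w i\<bar> = \<bar>b k - lam\<bar> / (2 * \<bar>a i\<bar> * \<bar>a k\<bar> * \<bar>S\<bar>)"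
    by (simp add: abs_mult)
  also have "\<dots> \<le> (b_hi - b_lo) / (2 * a_hi\<^sup>2 * (real (card J) / (- a_lo)))"
  proof (rule frac_le)
    have "b_lo \<le> lam" "lam \<le> b_hi"
      unfolding lam_def using lagrange_multiplier_bounds[OF _ _ neg b] fin by auto
    then show "\<bar>b k - lam\<bar> \<le> b_hi - b_lo" "0 \<le> b_hi - b_lo" using b by auto
    show "0 < 2 * a_hi\<^sup>2 * (real (card J) / (- a_lo))"
      using fin a_hi a_lo by (intro mult_pos_pos divide_pos_pos) (auto simp: card_gt_0_iff)
    have "(- a_hi) * (- a_hi) \<le> \<bar>a i\<bar> * \<bar>a k\<bar>"
      using a a_hi i by (intro mult_mono) auto
    then have "a_hi\<^sup>2 \<le> \<bar>a i\<bar> * \<bar>a k\<bar>" by (simp add: power2_eq_square)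
    moreover have "real (card J) / (- a_lo) \<le> \<bar>S\<bar>"
      unfolding S_def using a neg by (intro card_div_le_sum_inverse_abs) auto
    ultimately have "a_hi\<^sup>2 * (real (card J) / (- a_lo)) \<le> (\<bar>a i\<bar> * \<bar>a k\<bar>) * \<bar>S\<bar>"
      using a_lo by (intro mult_mono) (auto simp: divide_nonneg_neg)
    then show "2 * a_hi\<^sup>2 * (real (card J) / (- a_lo)) \<le> 2 * \<bar>a i\<bar> * \<bar>a k\<bar> * \<bar>S\<bar>"
      by (simp only: mult.assoc)
  qed
  also have "\<dots> = (b_hi - b_lo) * (- a_lo) / (2 * a_hi\<^sup>2 * real (card J))"
    by (simp add: divide_divide_eq_right)
  finally show ?thesis .
qed

theorem lemma1:
  fixes a b :: "nat \<Rightarrow> real" and a_lo a_hi b_lo b_hi :: real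
  assumes "a_hi < 0" and "0 < b_lo"
    and "\<And>i. i \<ge> 1 \<Longrightarrow> a_lo \<le> a i \<and> a i \<le> a_hi"
    and "\<And>i. i \<ge> 1 \<Longrightarrow> b_lo \<le> b i \<and> b i \<le> b_hi"
  shows "(\<exists>C. \<forall>N::nat. N \<ge> 2 \<longrightarrow> (\<forall>u w. is_maximizer a b {1..N} u \<longrightarrow> is_maximizer a b {2..N} w \<longrightarrow>
            (\<forall>i\<in>{2..N}. \<bar>u i - w i\<bar> \<le> C / real N)))
      \<and> (\<forall>U W :: nat \<Rightarrow> nat \<Rightarrow> real.
           (\<forall>N. N \<ge> 2 \<longrightarrow> is_maximizer a b {1..N} (U N) \<and> is_maximizer a b {2..N} (W N)) \<longrightarrow>
           (\<forall>i\<ge>2. (\<lambda>N. U N i - W N i) \<longlonglongrightarrow> 0))"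
proof -
  define C where "C = (b_hi - b_lo) * (- a_lo) / a_hi\<^sup>2"
  have "a_lo < 0" and "b_lo \<le> b_hi" using assms(1) assms(3,4)[of 1] by auto
  then have "0 \<le> C" unfolding C_def by (simp add: divide_nonpos_nonneg mult_nonneg_nonpos)
  have bound: "\<bar>u i - w i\<bar> \<le> C / real N"
    if N: "N \<ge> 2" and u: "is_maximizer a b {1..N} u" and w: "is_maximizer a b {2..N} w"
      and i: "i \<in> {2..N}" for N u w i
  proof -
    have "insert 1 {2..N} = {1..N}" using N by auto
    with u have u': "is_maximizer a b (insert 1 {2..N}) u" by simp
    have "\<bar>u i - w i\<bar> \<le> (b_hi - b_lo) * (- a_lo) / (2 * a_hi\<^sup>2 * real (card {2..N}))"
      by (rule maximizer_remove_index_diff[OF _ _ _ assms(1) _ _ u' w i]) (use N assms(3,4) in auto)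
    also have "\<dots> = C / (2 * real (N - 1))" by (simp add: C_def)
    also have "\<dots> \<le> C / real N"
      using \<open>0 \<le> C\<close> N by (intro divide_left_mono) (auto simp: of_nat_diff)
    finally show ?thesis .
  qed
  have limit: "(\<lambda>N. U N i - W N i) \<longlonglongrightarrow> 0"
    if max: "\<forall>N. N \<ge> 2 \<longrightarrow> is_maximizer a b {1..N} (U N) \<and> is_maximizer a b {2..N} (W N)"
      and "2 \<le> i" for U W :: "nat \<Rightarrow> nat \<Rightarrow> real" and i :: nat
  proof -
    have "\<forall>\<^sub>F N in sequentially. norm (U N i - W N i) \<le> norm (C / real N) * 1"
      using eventually_ge_at_top[of i]
      by eventually_elim (use bound max \<open>2 \<le> i\<close> \<open>0 \<le> C\<close> in auto)
    with lim_const_over_n[of C] show ?thesis by (rule tendsto_0_le)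
  qed
  show ?thesis using bound limit by blast
qed

end
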